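(* Let $n \ge 1$, $K \ge 1$, let $\mu_1,\dots,\mu_K \in \mathbb{R}^n$, let $\Sigma_1,\dots,\Sigma_K \in \mathbb{R}^{n\times n}$ be symmetric positive-definite matrices, let $\kappa_1,\dots,\kappa_K \in [0,1)$, and let $\epsilon \le 0$. For $k=1,\dots,K$ put $r_k := \sqrt{F^{-1}_{\chi^2_n}(\kappa_k)}$ and define the closed set $$\overline{R} := \bigcup_{k=1}^K \left\{ x \in \mathbb{R}^n \;\middle|\; (x-\mu_k)^T\Sigma_k^{-1}(x-\mu_k) \le r_k^2 \right\}.$$ For $p \in \mathbb{R}^n$ with $p\neq\mu_k$ for all $k$, define $$S(p) := \left\{ x \in \mathbb{R}^n \;\middle|\; \frac{(\mu_k - p)^{T}\Sigma_k^{-1}(x-p)}{\big\|\Sigma_k^{-1/2}(\mu_k - p)\big\|^2} \le \max\!\left(1 - \frac{r_k}{\big\|\Sigma_k^{-1/2}(\mu_k-p)\big\|},\, \epsilon\right) \text{ for all } k=1,\dots,K \right\}.$$ Then for every $p \in \mathbb{R}^n \setminus \overline{R}$, the point $p$ lies in the interior $\mathring{S}(p)$ of $S(p)$, and $\mathring{S}(p) \subseteq \mathbb{R}^n \setminus \overline{R}$.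
   Context: $F_{\chi^2_n}$ denotes the cumulative distribution function of the chi-squared distribution with $n$ degrees of freedom, and $F^{-1}_{\chi^2_n}$ its inverse. $\|\cdot\|$ is the Euclidean norm. For a symmetric positive-definite $\Sigma = V\,\mathrm{diag}(\sigma_1,\dots,\sigma_n)V^T$ (orthogonal $V$, $\sigma_i>0$), $\Sigma^{-1/2} := V\,\mathrm{diag}(\sigma_1^{-1/2},\dots,\sigma_n^{-1/2})V^T$. The set $\overline{R}$ is the approximate confidence region of a Gaussian mixture model (union of the level-$\kappa_k$ confidence ellipsoids of its components $\mathcal N(\mu_k,\Sigma_k)$), and $S(p)$ is the probabilistically safe corridor around $p$, bounded by hyperplanes tangent to these ellipsoids. Note every $p\notin\overline{R}$ automatically satisfies $p\neq\mu_k$ for all $k$. *)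

theory Defs
  imports "HOL-Analysis.Analysis"
begin

definition chi2_density :: "nat \<Rightarrow> real \<Rightarrow> real" where
  "chi2_density n t =
     (if t > 0 then t powr (real n / 2 - 1) * exp (- t / 2) / (2 powr (real n / 2) * Gamma (real n / 2))
      else 0)"

definition chi2_cdf :: "nat \<Rightarrow> real \<Rightarrow> real" where
  "chi2_cdf n x = (LBINT t:{..x}. chi2_density n t)"

definition chi2_cdf_inv :: "nat \<Rightarrow> real \<Rightarrow> real" where
  "chi2_cdf_inv n \<kappa> = (THE x. 0 \<le> x \<and> chi2_cdf n x = \<kappa>)"

definition diag_mat :: "('n::finite \<Rightarrow> real) \<Rightarrow> real^'n^'n" where
  "diag_mat d = (\<chi> i j. if i = j then d i else 0)"

definition sym_pos_def :: "real^'n^'n \<Rightarrow> bool" where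
  "sym_pos_def A \<longleftrightarrow> transpose A = A \<and> (\<forall>x. x \<noteq> 0 \<longrightarrow> 0 < x \<bullet> (A *v x))"

definition mat_inv_sqrt :: "real^'n^'n \<Rightarrow> real^'n^'n" where
  "mat_inv_sqrt A = (SOME M. \<exists>V \<sigma>. orthogonal_matrix V \<and> (\<forall>i. 0 < \<sigma> i) \<and>
       A = V ** diag_mat \<sigma> ** transpose V \<and>
       M = V ** diag_mat (\<lambda>i. 1 / sqrt (\<sigma> i)) ** transpose V)"

definition Rbar :: "nat \<Rightarrow> (nat \<Rightarrow> real^'n::finite) \<Rightarrow> (nat \<Rightarrow> real^'n^'n) \<Rightarrow> (nat \<Rightarrow> real) \<Rightarrow> (real^'n) set" where
  "Rbar K \<mu> \<Sigma> \<kappa> = (\<Union>k\<in>{1..K}. {x. (x - \<mu> k) \<bullet> (matrix_inv (\<Sigma> k) *v (x - \<mu> k))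
        \<le> (sqrt (chi2_cdf_inv CARD('n) (\<kappa> k)))\<^sup>2})"

definition Scorr :: "nat \<Rightarrow> (nat \<Rightarrow> real^'n::finite) \<Rightarrow> (nat \<Rightarrow> real^'n^'n) \<Rightarrow> (nat \<Rightarrow> real) \<Rightarrow> real \<Rightarrow> real^'n \<Rightarrow> (real^'n) set" where
  "Scorr K \<mu> \<Sigma> \<kappa> \<epsilon> p = {x. \<forall>k\<in>{1..K}.
      ((\<mu> k - p) \<bullet> (matrix_inv (\<Sigma> k) *v (x - p))) / (norm (mat_inv_sqrt (\<Sigma> k) *v (\<mu> k - p)))\<^sup>2
      \<le> max (1 - sqrt (chi2_cdf_inv CARD('n) (\<kappa> k)) / norm (mat_inv_sqrt (\<Sigma> k) *v (\<mu> k - p))) \<epsilon>}"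

end

theory Submission
  imports Defs
begin

text \<open>Whitening by \<open>M = \<Sigma>\<^sub>k\<^sup>-\<^sup>1\<^sup>/\<^sup>2\<close> maps the k-th ellipsoid onto the ball of
  radius \<open>r\<^sub>k\<close> about \<open>M \<mu>\<^sub>k\<close>. For p outside it, \<open>d\<^sub>k = \<parallel>M (\<mu>\<^sub>k - p)\<parallel> > r\<^sub>k \<ge> 0\<close>,
  so \<open>1 - r\<^sub>k/d\<^sub>k > 0 \<ge> \<epsilon>\<close> and the k-th corridor constraint is the closed halfspace
  bounded by the hyperplane that is orthogonal to \<open>M (\<mu>\<^sub>k - p)\<close> and tangent to the ball.
  Its interior, the open halfspace, contains p because \<open>d\<^sub>k > r\<^sub>k\<close> and misses the ball by
  Cauchy-Schwarz; interior commutes with the finite intersection over k.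

  Two facts keep the definitions from degenerating: \<open>r\<^sub>k \<ge> 0\<close> because the chi-squared
  quantile exists (the CDF is continuous, strictly increasing on \<open>[0, \<infinity>)\<close> and tends to 1),
  and \<open>\<Sigma>\<^sup>-\<^sup>1\<^sup>/\<^sup>2\<close> exists by the spectral theorem, proved by maximising the
  quadratic form on the unit sphere.\<close>

section \<open>Quantiles of the chi-squared distribution\<close>

locale halfline_density =
  fixes f :: "real \<Rightarrow> real"
  assumes vanishes_nonpos: "\<And>t. t \<le> 0 \<Longrightarrow> f t = 0"
    and pos: "\<And>t. 0 < t \<Longrightarrow> 0 < f t"
    and continuous_pos: "continuous_on {0<..} f"
    and borel_measurable[measurable]: "f \<in> borel_measurable borel"
    and nn_integral_eq_1: "(\<integral>\<^sup>+t. ennreal (f t) \<partial>lborel) = 1"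
begin

abbreviation cdf :: "real \<Rightarrow> real" where
  "cdf x \<equiv> LBINT t:{..x}. f t"

lemma nonneg: "0 \<le> f t"
  using vanishes_nonpos pos by (cases "t \<le> 0") (auto intro: less_imp_le)

lemma integrable_lborel: "integrable lborel f"
  by (rule integrableI_nn_integral_finite[where x=1]) (auto simp: nonneg nn_integral_eq_1)

lemma set_integrable_lborel: "A \<in> sets lborel \<Longrightarrow> set_integrable lborel A f"
  unfolding set_integrable_def by (rule integrable_mult_indicator) (auto simp: integrable_lborel)

lemma cdf_eq_set_integral: "0 \<le> x \<Longrightarrow> cdf x = (LBINT t:{0..x}. f t)"
  unfolding set_lebesgue_integral_def
  by (rule Bochner_Integration.integral_cong) (auto simp: indicator_def vanishes_nonpos)

lemma cdf_eq_integral: "0 \<le> x \<Longrightarrow> cdf x = integral {0..x} f"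
  using set_borel_integral_eq_integral(2)[OF set_integrable_lborel, of "{0..x}"]
  by (simp only: cdf_eq_set_integral atLeastAtMost_borel sets_lborel)

lemma integrable_on_interval: "f integrable_on {a..b}"
  using set_borel_integral_eq_integral(1)[OF set_integrable_lborel] by simp

lemma cdf_continuous_on: "continuous_on {0..b} cdf"
  using indefinite_integral_continuous_1[OF integrable_on_interval, of 0 b]
  by (rule continuous_on_cong[THEN iffD1, rotated 2]) (auto simp: cdf_eq_integral)

lemma cdf_tendsto_1: "(cdf \<longlongrightarrow> 1) at_top"
proof -
  have "((\<lambda>b. LBINT t:{0..b}. f t) \<longlongrightarrow> (LBINT t:{0..}. f t)) at_top"
    by (rule tendsto_set_lebesgue_integral_at_top) (auto simp: set_integrable_lborel)
  moreover have "(LBINT t:{0..}. f t) = integral\<^sup>L lborel f"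
    unfolding set_lebesgue_integral_def
    by (rule Bochner_Integration.integral_cong) (auto simp: indicator_def vanishes_nonpos)
  moreover have "integral\<^sup>L lborel f = 1"
    using nn_integral_eq_integral[OF integrable_lborel] nn_integral_eq_1 integral_nonneg_AE[of f lborel]
    by (simp add: nonneg)
  ultimately have "((\<lambda>b. LBINT t:{0..b}. f t) \<longlongrightarrow> 1) at_top" by simp
  then show ?thesis
    by (rule Lim_transform_eventually)
       (auto simp: eventually_at_top_linorder cdf_eq_set_integral intro!: exI[of _ 0])
qed

lemma cdf_strict_mono:
  assumes "0 \<le> x" "x < y"
  shows "cdf x < cdf y"
proof -
  define m where "m = (x + y) / 2"
  have m: "x < m" "m < y" using assms by (auto simp: m_def)
  have "continuous_on {m..y} f"
    using m assms by (intro continuous_on_subset[OF continuous_pos]) auto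
  then have "integral {m..y} (\<lambda>_. 0) < integral {m..y} f"
    using m assms by (intro integral_less_real) (auto intro: pos)
  moreover have "0 \<le> integral {x..m} f"
    by (rule integral_nonneg[OF integrable_on_interval nonneg])
  moreover have "integral {0..y} f = integral {0..x} f + integral {x..m} f + integral {m..y} f"
    using assms m integrable_on_interval
    by (simp add: Henstock_Kurzweil_Integration.integral_combine)
  ultimately show ?thesis
    using assms by (simp add: cdf_eq_integral)
qed

lemma ex1_quantile:
  assumes "0 \<le> \<kappa>" "\<kappa> < 1"
  shows "\<exists>!x. 0 \<le> x \<and> cdf x = \<kappa>"
proof -
  obtain b where "\<kappa> < cdf b" "0 \<le> b"
    using order_tendstoD(1)[OF cdf_tendsto_1 \<open>\<kappa> < 1\<close>]
    by (metis eventually_at_top_linorder linorder_linear)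
  moreover have "cdf 0 = 0"
    by (simp add: cdf_eq_integral)
  ultimately obtain x where "0 \<le> x" "cdf x = \<kappa>"
    using IVT'[of cdf 0 \<kappa> b] cdf_continuous_on assms by auto
  moreover have "y = x" if "0 \<le> y" "cdf y = \<kappa>" for y
    using cdf_strict_mono that \<open>0 \<le> x\<close> \<open>cdf x = \<kappa>\<close>
    by (metis less_irrefl linorder_neqE_linordered_idom)
  ultimately show ?thesis by blast
qed

end

lemma chi2_density_eq_Gamma_integrand:
  "chi2_density n t = indicator {0..} t * t powr (real n / 2 - 1) / exp (t / 2)
      / (2 powr (real n / 2) * Gamma (real n / 2))"
  by (auto simp: chi2_density_def indicator_def exp_minus field_simps)

lemma nn_integral_chi2_density:
  assumes "0 < n"
  shows "(\<integral>\<^sup>+t. ennreal (chi2_density n t) \<partial>lborel) = 1"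
proof -
  define a where "a = real n / 2"
  have a: "0 < a" using assms by (simp add: a_def)
  define C where "C = 2 powr a * Gamma a"
  have C: "0 < C" using a by (simp add: C_def)
  define h where "h t = ennreal (indicator {0..} t * t powr (a - 1) / exp (t / 2))" for t :: real
  have [measurable]: "h \<in> borel_measurable borel" unfolding h_def by measurable
  have "(\<integral>\<^sup>+t. h t \<partial>lborel) = ennreal \<bar>2\<bar> * (\<integral>\<^sup>+x. h (0 + 2 * x) \<partial>lborel)"
    by (rule nn_integral_real_affine) auto
  also have "(\<lambda>x. h (0 + 2 * x)) = (\<lambda>x. ennreal (2 powr (a - 1)) *
       ennreal (indicator {0..} x * x powr (a - 1) / exp x))"
    by (auto simp: h_def indicator_def powr_mult ennreal_mult'[symmetric])
  also have "(\<integral>\<^sup>+x. ennreal (2 powr (a - 1)) *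
       ennreal (indicator {0..} x * x powr (a - 1) / exp x) \<partial>lborel) =
       ennreal (2 powr (a - 1)) * Gamma a"
    by (subst nn_integral_cmult) (auto simp: Gamma_conv_nn_integral_real[OF a])
  also have "ennreal \<bar>2\<bar> * (ennreal (2 powr (a - 1)) * Gamma a) = ennreal (2 * (2 powr (a - 1) * Gamma a))"
    using a by (simp add: ennreal_mult less_imp_le)
  also have "2 * (2 powr (a - 1) * Gamma a) = C"
    by (simp add: C_def powr_diff)
  finally have "(\<integral>\<^sup>+t. h t \<partial>lborel) = ennreal C" .
  moreover have "(\<lambda>t. ennreal (chi2_density n t)) = (\<lambda>t. h t * ennreal (1 / C))"
    by (auto simp: chi2_density_eq_Gamma_integrand h_def a_def[symmetric] C_def[symmetric]
        ennreal_mult'[symmetric] C)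
  ultimately show ?thesis
    using C by (simp add: nn_integral_multc ennreal_mult'[symmetric])
qed

lemma halfline_density_chi2:
  assumes "0 < n"
  shows "halfline_density (chi2_density n)"
proof
  show "0 < chi2_density n t" if "0 < t" for t
    using that assms by (auto simp: chi2_density_def)
  have "continuous_on {0<..} (\<lambda>t. t powr (real n / 2 - 1) * exp (- t / 2) /
     (2 powr (real n / 2) * Gamma (real n / 2)))"
    using assms by (intro continuous_intros) (auto simp: less_imp_neq[symmetric])
  then show "continuous_on {0<..} (chi2_density n)"
    by (rule continuous_on_cong[THEN iffD1, rotated 2]) (auto simp: chi2_density_def)
  show "chi2_density n \<in> borel_measurable borel"
    unfolding chi2_density_eq_Gamma_integrand by measurable
  show "chi2_density n t = 0" if "t \<le> 0" for t
    using that by (simp add: chi2_density_def)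
  show "(\<integral>\<^sup>+t. ennreal (chi2_density n t) \<partial>lborel) = 1"
    using assms by (rule nn_integral_chi2_density)
qed

text \<open>\<^const>\<open>chi2_cdf_inv\<close> is a definite description, so nothing is known about its value
  until the quantile is shown to be unique.\<close>

lemma chi2_cdf_inv_nonneg:
  assumes "0 \<le> \<kappa>" "\<kappa> < 1"
  shows "0 \<le> chi2_cdf_inv CARD('n::finite) \<kappa>"
  using halfline_density.ex1_quantile[OF halfline_density_chi2 assms]
  unfolding chi2_cdf_inv_def chi2_cdf_def by (rule theI'[THEN conjunct1]) simp

section \<open>Spectral theorem for real symmetric matrices\<close>

lemma symmetric_matrix_inner_commute:
  fixes A :: "real^'n^'n"
  assumes "transpose A = A"
  shows "x \<bullet> (A *v y) = (A *v x) \<bullet> y"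
  by (metis assms dot_lmul_matrix transpose_matrix_vector)

lemma nonpos_if_le_all_pos_multiples:
  fixes c E :: real
  assumes "\<And>t. 0 < t \<Longrightarrow> c \<le> t * E"
  shows "c \<le> 0"
proof (rule field_le_epsilon)
  fix e :: real assume "0 < e"
  then have "c \<le> e / (\<bar>E\<bar> + 1) * E" by (intro assms) simp
  also have "\<dots> \<le> e"
    using \<open>0 < e\<close> by (simp add: divide_le_eq mult_left_mono abs_ge_self add_increasing2 mult.commute)
  finally show "c \<le> 0 + e" by simp
qed

lemma quadratic_form_max_on_subspace:
  fixes A :: "real^'n^'n"
  assumes S: "subspace S" and "S \<noteq> {0}"
  shows "\<exists>v\<in>S. norm v = 1 \<and> (\<forall>y\<in>S. y \<bullet> (A *v y) \<le> v \<bullet> (A *v v) * (norm y)\<^sup>2)"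
proof -
  define q where "q x = x \<bullet> (A *v x)" for x
  have "continuous_on UNIV q"
    unfolding q_def by (intro continuous_intros linear_continuous_on matrix_vector_mul_linear)
  moreover have "compact (S \<inter> sphere 0 1)"
    by (intro closed_Int_compact closed_subspace S compact_sphere)
  moreover obtain x0 where "x0 \<in> S" "x0 \<noteq> 0" using \<open>S \<noteq> {0}\<close> S subspace_0 by blast
  then have "x0 /\<^sub>R norm x0 \<in> S \<inter> sphere 0 1"
    using S by (auto simp: subspace_scale)
  ultimately obtain v where v: "v \<in> S" "norm v = 1"
    and v_max: "\<And>y. y \<in> S \<inter> sphere 0 1 \<Longrightarrow> q y \<le> q v"
    using continuous_attains_sup[of "S \<inter> sphere 0 1" q]
    by (metis IntD1 IntD2 continuous_on_subset empty_iff mem_sphere_0 subset_UNIV)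
  have "q y \<le> q v * (norm y)\<^sup>2" if "y \<in> S" for y
  proof (cases "y = 0")
    case False
    have "q (y /\<^sub>R norm y) \<le> q v"
      using that False S by (intro v_max) (auto simp: subspace_scale)
    then show ?thesis
      using False by (simp add: q_def matrix_vector_mult_scaleR power2_eq_square field_simps)
  qed (simp add: q_def)
  then show ?thesis
    using v unfolding q_def by blast
qed

lemma symmetric_matrix_eigenvector_in_invariant_subspace:
  fixes A :: "real^'n^'n"
  assumes sym: "transpose A = A" and S: "subspace S" and inv: "\<And>x. x \<in> S \<Longrightarrow> A *v x \<in> S"
    and "S \<noteq> {0}"
  shows "\<exists>v\<in>S. \<exists>l. norm v = 1 \<and> A *v v = l *\<^sub>R v"
proof -
  define q where "q x = x \<bullet> (A *v x)" for x
  obtain v where v: "v \<in> S" "norm v = 1" and q_le: "\<And>y. y \<in> S \<Longrightarrow> q y \<le> q v * (norm y)\<^sup>2"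
    using quadratic_form_max_on_subspace[OF S \<open>S \<noteq> {0}\<close>, of A] unfolding q_def by blast
  have vv: "v \<bullet> v = 1" using v by (simp add: norm_eq_1)
  define u where "u = A *v v - q v *\<^sub>R v"
  have u: "u \<in> S" "u \<bullet> v = 0"
    using S inv v vv
    by (auto simp: u_def q_def subspace_diff subspace_scale inner_diff_left inner_diff_right inner_commute)
  have uAv: "u \<bullet> (A *v v) = u \<bullet> u"
    using u(2) by (simp add: u_def inner_diff_right)
  \<comment> \<open>v maximises the quadratic form on the unit sphere of S, so moving from v in the
     direction of the residual u cannot increase it to first order; this forces u = 0.\<close>
  have "2 * (u \<bullet> u) \<le> t * (q v * (u \<bullet> u) - q u)" if "0 < t" for t
  proof -
    have "q (v + t *\<^sub>R u) \<le> q v * (norm (v + t *\<^sub>R u))\<^sup>2"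
      using S u v by (intro q_le) (simp add: subspace_add subspace_scale)
    moreover have "q (v + t *\<^sub>R u) = q v + 2 * t * (u \<bullet> u) + t\<^sup>2 * q u"
      using symmetric_matrix_inner_commute[OF sym, of v u] uAv
      by (simp add: q_def inner_commute power2_eq_square algebra_simps)
    moreover have "(norm (v + t *\<^sub>R u))\<^sup>2 = 1 + t\<^sup>2 * (u \<bullet> u)"
      unfolding power2_norm_eq_inner
      using u(2) vv by (simp add: inner_add_left inner_add_right inner_commute power2_eq_square)
    ultimately have "t * (2 * (u \<bullet> u)) \<le> t * (t * (q v * (u \<bullet> u) - q u))"
      by (simp add: algebra_simps power2_eq_square)
    then show ?thesis using \<open>0 < t\<close> by simp
  qed
  then have "2 * (u \<bullet> u) \<le> 0"
    by (rule nonpos_if_le_all_pos_multiples)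
  then have "u = 0"
    using inner_gt_zero_iff[of u] by linarith
  then show ?thesis using v by (auto simp: u_def q_def)
qed

lemma symmetric_matrix_orthonormal_eigenbasis_of_invariant_subspace:
  fixes A :: "real^'n^'n"
  assumes sym: "transpose A = A"
  shows "subspace S \<Longrightarrow> \<forall>x\<in>S. A *v x \<in> S \<Longrightarrow>
    \<exists>B \<subseteq> S. pairwise orthogonal B \<and> (\<forall>b\<in>B. norm b = 1 \<and> (\<exists>l. A *v b = l *\<^sub>R b)) \<and> span B = S"
proof (induction "dim S" arbitrary: S rule: less_induct)
  case less
  note S = less.prems(1) and inv = less.prems(2)
  show ?case
  proof (cases "S = {0}")
    case True
    then show ?thesis by (intro exI[of _ "{}"]) auto
  next
    case False
    then obtain v l where v: "v \<in> S" "norm v = 1" "A *v v = l *\<^sub>R v"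
      using symmetric_matrix_eigenvector_in_invariant_subspace[OF sym S _ False] inv by blast
    define S' where "S' = {x \<in> S. x \<bullet> v = 0}"
    have S': "subspace S'"
      using S unfolding S'_def subspace_def by (auto simp: inner_add_left)
    have inv': "\<forall>x\<in>S'. A *v x \<in> S'"
    proof
      fix x assume "x \<in> S'"
      have "(A *v x) \<bullet> v = x \<bullet> (A *v v)"
        using symmetric_matrix_inner_commute[OF sym, of x v] by simp
      also have "\<dots> = 0" using \<open>x \<in> S'\<close> by (simp add: v(3) S'_def)
      finally show "A *v x \<in> S'" using \<open>x \<in> S'\<close> inv by (auto simp: S'_def)
    qed
    have "v \<notin> S'" using v(2) by (auto simp: S'_def)
    then have "S' \<subset> S" using v(1) unfolding S'_def by blast
    then have "dim S' < dim S"
      using S S' dim_psubset[of S' S] by (metis span_eq_iff)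
    then obtain B' where B': "B' \<subseteq> S'" "pairwise orthogonal B'"
      "\<forall>b\<in>B'. norm b = 1 \<and> (\<exists>l. A *v b = l *\<^sub>R b)" "span B' = S'"
      using less.hyps[OF _ S' inv'] by blast
    have "x \<in> span (insert v B')" if "x \<in> S" for x
    proof -
      have "x - (x \<bullet> v) *\<^sub>R v \<in> span B'"
        using that v S B'(4) by (auto simp: S'_def subspace_diff subspace_scale inner_diff_left norm_eq_1)
      then have "x - (x \<bullet> v) *\<^sub>R v \<in> span (insert v B')"
        using span_mono[of B' "insert v B'"] by blast
      moreover have "(x \<bullet> v) *\<^sub>R v \<in> span (insert v B')"
        by (simp add: span_base span_scale)
      ultimately have "x - (x \<bullet> v) *\<^sub>R v + (x \<bullet> v) *\<^sub>R v \<in> span (insert v B')"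
        by (rule span_add)
      then show ?thesis by simp
    qed
    moreover have "insert v B' \<subseteq> S" using v(1) B'(1) by (auto simp: S'_def)
    ultimately have "span (insert v B') = S"
      using S span_minimal[of "insert v B'" S] by blast
    moreover have "pairwise orthogonal (insert v B')"
      using B'(1,2) by (auto simp: pairwise_insert S'_def orthogonal_def inner_commute)
    ultimately show ?thesis
      using \<open>insert v B' \<subseteq> S\<close> B'(3) v by (intro exI[of _ "insert v B'"]) auto
  qed
qed

lemma symmetric_matrix_diagonalization:
  fixes A :: "real^'n^'n"
  assumes sym: "transpose A = A"
  shows "\<exists>V \<sigma>. orthogonal_matrix V \<and> (\<forall>i. A *v column i V = \<sigma> i *\<^sub>R column i V) \<and>
     A = V ** diag_mat \<sigma> ** transpose V"
proof -
  obtain B where B: "pairwise orthogonal B" "\<forall>b\<in>B. norm b = 1 \<and> (\<exists>l. A *v b = l *\<^sub>R b)"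
    "span B = UNIV"
    using symmetric_matrix_orthonormal_eigenbasis_of_invariant_subspace[OF sym, of UNIV] by auto
  have "independent B"
    using B(1,2) pairwise_orthogonal_independent by force
  then have "finite B" "card B = CARD('n)"
    using B(3) dim_eq_card_independent[of B] dim_span[of B] by (auto intro: finiteI_independent)
  then obtain f where f: "bij_betw f (UNIV::'n set) B"
    using finite_same_card_bij[of "UNIV::'n set" B] by auto
  define \<sigma> where "\<sigma> i = (SOME l. A *v f i = l *\<^sub>R f i)" for i
  have eig: "A *v f i = \<sigma> i *\<^sub>R f i" for i
    unfolding \<sigma>_def using B(2) f by (metis (mono_tags, lifting) bij_betwE someI_ex UNIV_I)
  define V where "V = (\<chi> r c. f c $ r)"
  have col: "column i V = f i" for i by (simp add: V_def column_def vec_eq_iff)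
  have V: "orthogonal_matrix V"
    unfolding orthogonal_matrix_orthonormal_columns col
    using B(1,2) f by (auto simp: pairwise_def bij_betw_def inj_def) blast
  have "A ** V = V ** diag_mat \<sigma>"
  proof -
    have "(\<Sum>k\<in>UNIV. A $ i $ k * f j $ k) = \<sigma> j * f j $ i" for i j
      using arg_cong[OF eig[of j], of "\<lambda>x. x $ i"] by (simp add: matrix_vector_mult_def)
    then show ?thesis
      by (simp add: vec_eq_iff matrix_matrix_mult_def diag_mat_def V_def if_distrib cong: if_cong)
  qed
  then have "A = V ** diag_mat \<sigma> ** transpose V"
    using V by (metis matrix_mul_assoc matrix_mul_rid orthogonal_matrix_def)
  moreover have "\<forall>i. A *v column i V = \<sigma> i *\<^sub>R column i V"
    using eig col by simp
  ultimately show ?thesis using V by blast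
qed

lemma sym_pos_def_diagonalization:
  fixes S :: "real^'n^'n"
  assumes "sym_pos_def S"
  shows "\<exists>V \<sigma>. orthogonal_matrix V \<and> (\<forall>i. 0 < \<sigma> i) \<and> S = V ** diag_mat \<sigma> ** transpose V"
proof -
  obtain V \<sigma> where V: "orthogonal_matrix V" "\<forall>i. S *v column i V = \<sigma> i *\<^sub>R column i V"
     "S = V ** diag_mat \<sigma> ** transpose V"
    using symmetric_matrix_diagonalization[of S] assms by (auto simp: sym_pos_def_def)
  have "0 < \<sigma> i" for i
  proof -
    have "norm (column i V) = 1" using V(1) by (simp add: orthogonal_matrix_orthonormal_columns)
    then have "column i V \<noteq> 0" by auto
    then have "0 < column i V \<bullet> (S *v column i V)"
      using assms by (simp add: sym_pos_def_def)
    also have "\<dots> = \<sigma> i" using V(2) \<open>norm (column i V) = 1\<close> by (simp add: norm_eq_1)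
    finally show ?thesis .
  qed
  then show ?thesis using V by blast
qed

section \<open>The inverse square root of a positive definite matrix\<close>

lemma diag_mat_mult: "diag_mat a ** diag_mat b = diag_mat (\<lambda>i. a i * b i)"
proof -
  have "(\<Sum>k\<in>UNIV. (if i = k then a i else 0) * (if k = j then b k else 0)) =
      (if i = j then a i * b i else 0)" for i j
    by (simp add: if_distrib[of "\<lambda>x. x * _"] cong: if_cong)
  then show ?thesis by (simp add: vec_eq_iff matrix_matrix_mult_def diag_mat_def)
qed

lemma transpose_diag_mat: "transpose (diag_mat a) = diag_mat a"
  by (simp add: vec_eq_iff transpose_def diag_mat_def)

lemma diag_mat_1: "diag_mat (\<lambda>_. 1) = mat 1"
  by (simp add: vec_eq_iff mat_def diag_mat_def)

lemma orthogonal_matrix_conj_mult: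
  assumes "orthogonal_matrix W"
  shows "(W ** X ** transpose W) ** (W ** Y ** transpose W) = W ** (X ** Y) ** transpose W"
proof -
  have "(W ** X ** transpose W) ** (W ** Y ** transpose W) = W ** X ** (transpose W ** W) ** Y ** transpose W"
    by (simp add: matrix_mul_assoc)
  also have "transpose W ** W = mat 1"
    using assms by (simp add: orthogonal_matrix_def)
  finally show ?thesis
    by (simp add: matrix_mul_assoc)
qed

lemma matrix_inv_eqI:
  fixes A B :: "'a::field^'n^'n"
  assumes "A ** B = mat 1"
  shows "matrix_inv A = B"
proof -
  have "\<exists>A'. A ** A' = mat 1 \<and> A' ** A = mat 1"
    using assms matrix_left_right_inverse by blast
  then have "A ** matrix_inv A = mat 1 \<and> matrix_inv A ** A = mat 1"
    unfolding matrix_inv_def by (rule someI_ex)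
  then show ?thesis
    using assms by (metis matrix_mul_assoc matrix_mul_lid)
qed

text \<open>\<^const>\<open>mat_inv_sqrt\<close> picks an arbitrary spectral decomposition; every choice gives a
  symmetric square root of the inverse.\<close>

lemma mat_inv_sqrt_inner:
  assumes "sym_pos_def S"
  shows "a \<bullet> (matrix_inv S *v b) = (mat_inv_sqrt S *v a) \<bullet> (mat_inv_sqrt S *v b)"
proof -
  have "\<exists>M V \<sigma>. orthogonal_matrix V \<and> (\<forall>i. 0 < \<sigma> i) \<and> S = V ** diag_mat \<sigma> ** transpose V \<and>
       M = V ** diag_mat (\<lambda>i. 1 / sqrt (\<sigma> i)) ** transpose V"
    using sym_pos_def_diagonalization[OF assms] by blast
  then have "\<exists>V \<sigma>. orthogonal_matrix V \<and> (\<forall>i. 0 < \<sigma> i) \<and> S = V ** diag_mat \<sigma> ** transpose V \<and>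
       mat_inv_sqrt S = V ** diag_mat (\<lambda>i. 1 / sqrt (\<sigma> i)) ** transpose V"
    unfolding mat_inv_sqrt_def by (rule someI_ex)
  then obtain W \<tau> where W: "orthogonal_matrix W" "\<forall>i. 0 < \<tau> i"
    "S = W ** diag_mat \<tau> ** transpose W"
    and M: "mat_inv_sqrt S = W ** diag_mat (\<lambda>i. 1 / sqrt (\<tau> i)) ** transpose W" by blast
  define M where "M = mat_inv_sqrt S"
  have MM: "M ** M = W ** diag_mat (\<lambda>i. 1 / \<tau> i) ** transpose W"
    using W(1,2) by (simp add: M_def M orthogonal_matrix_conj_mult diag_mat_mult less_imp_le)
  have "S ** (M ** M) = W ** diag_mat (\<lambda>_. 1) ** transpose W"
    unfolding MM W(3) using W(1,2)
    by (simp add: orthogonal_matrix_conj_mult diag_mat_mult less_imp_neq[symmetric])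
  also have "\<dots> = mat 1"
    using W(1) by (simp add: diag_mat_1 orthogonal_matrix_def)
  finally have inv: "matrix_inv S = M ** M"
    by (rule matrix_inv_eqI)
  have "transpose M = M"
    by (simp add: M_def M matrix_transpose_mul transpose_diag_mat matrix_mul_assoc)
  then show ?thesis
    by (metis M_def inv dot_lmul_matrix transpose_matrix_vector matrix_vector_mul_assoc)
qed

section \<open>Ellipsoids and their tangent halfspaces\<close>

lemma interior_INT_finite:
  "finite I \<Longrightarrow> interior (\<Inter>i\<in>I. S i) = (\<Inter>i\<in>I. interior (S i))"
  by (induction I rule: finite_induct) auto

lemma ball_beyond_tangent_hyperplane:
  fixes c q y :: "'a::real_inner"
  assumes "norm (y - c) \<le> r"
  shows "(norm (c - q))\<^sup>2 - r * norm (c - q) \<le> (c - q) \<bullet> (y - q)"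
proof -
  have "(c - q) \<bullet> (c - y) \<le> norm (c - q) * r"
    using norm_cauchy_schwarz[of "c - q" "c - y"] assms
    by (metis norm_minus_commute mult_left_mono norm_ge_zero order_trans)
  moreover have "(c - q) \<bullet> (y - q) = (norm (c - q))\<^sup>2 - (c - q) \<bullet> (c - y)"
    by (simp add: power2_norm_eq_inner algebra_simps)
  ultimately show ?thesis by (simp add: algebra_simps)
qed

lemma corridor_bound_iff:
  fixes a d r \<epsilon> :: real
  assumes "0 \<le> r" "r < d" "\<epsilon> \<le> 0"
  shows "a / d\<^sup>2 \<le> max (1 - r / d) \<epsilon> \<longleftrightarrow> a \<le> d\<^sup>2 - r * d"
proof -
  have "r / d < 1" using assms by simp
  then have "max (1 - r / d) \<epsilon> = 1 - r / d" using assms(3) by simp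
  moreover have "(1 - r / d) * d\<^sup>2 = d\<^sup>2 - r * d" using assms by (simp add: field_simps power2_eq_square)
  ultimately show ?thesis using assms by (simp add: divide_le_eq)
qed

definition ellipsoid :: "real^'n \<Rightarrow> real^'n^'n \<Rightarrow> real \<Rightarrow> (real^'n::finite) set" where
  "ellipsoid \<mu> \<Sigma> r = {x. (x - \<mu>) \<bullet> (matrix_inv \<Sigma> *v (x - \<mu>)) \<le> r\<^sup>2}"

definition tangent_halfspace :: "real^'n \<Rightarrow> real^'n^'n \<Rightarrow> real \<Rightarrow> real^'n \<Rightarrow> (real^'n::finite) set" where
  "tangent_halfspace \<mu> \<Sigma> r p = {x. (\<mu> - p) \<bullet> (matrix_inv \<Sigma> *v (x - p)) \<le>
     (norm (mat_inv_sqrt \<Sigma> *v (\<mu> - p)))\<^sup>2 - r * norm (mat_inv_sqrt \<Sigma> *v (\<mu> - p))}"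

lemma Rbar_eq_Union_ellipsoid:
  fixes \<mu> :: "nat \<Rightarrow> real^'n::finite"
  shows "Rbar K \<mu> \<Sigma> \<kappa> = (\<Union>k\<in>{1..K}. ellipsoid (\<mu> k) (\<Sigma> k) (sqrt (chi2_cdf_inv CARD('n) (\<kappa> k))))"
  by (simp add: Rbar_def ellipsoid_def)

lemma mem_ellipsoid_iff_whitened:
  assumes "sym_pos_def \<Sigma>"
  shows "x \<in> ellipsoid \<mu> \<Sigma> r \<longleftrightarrow>
    (norm (mat_inv_sqrt \<Sigma> *v x - mat_inv_sqrt \<Sigma> *v \<mu>))\<^sup>2 \<le> r\<^sup>2"
  using mat_inv_sqrt_inner[OF assms, of "x - \<mu>" "x - \<mu>"]
  by (simp add: ellipsoid_def power2_norm_eq_inner matrix_vector_mult_diff_distrib)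

lemma whitened_dist_gt_radius:
  assumes "sym_pos_def \<Sigma>" "p \<notin> ellipsoid \<mu> \<Sigma> r"
  shows "r < norm (mat_inv_sqrt \<Sigma> *v (\<mu> - p))"
proof -
  let ?M = "(*v) (mat_inv_sqrt \<Sigma>)"
  have "\<not> (norm (?M p - ?M \<mu>))\<^sup>2 \<le> r\<^sup>2"
    using assms(2) unfolding mem_ellipsoid_iff_whitened[OF assms(1)] .
  then have "r < norm (?M p - ?M \<mu>)"
    by (meson norm_ge_zero not_le power_mono)
  also have "norm (?M p - ?M \<mu>) = norm (?M (\<mu> - p))"
    by (metis norm_minus_commute matrix_vector_mult_diff_distrib)
  finally show ?thesis .
qed

lemma ellipsoid_beyond_tangent_hyperplane:
  fixes p :: "real^'n::finite"
  assumes "sym_pos_def \<Sigma>" "0 \<le> r" "x \<in> ellipsoid \<mu> \<Sigma> r"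
  defines "d \<equiv> norm (mat_inv_sqrt \<Sigma> *v (\<mu> - p))"
  shows "d\<^sup>2 - r * d \<le> (\<mu> - p) \<bullet> (matrix_inv \<Sigma> *v (x - p))"
proof -
  let ?M = "(*v) (mat_inv_sqrt \<Sigma>)"
  have "(norm (?M x - ?M \<mu>))\<^sup>2 \<le> r\<^sup>2"
    using assms(3) unfolding mem_ellipsoid_iff_whitened[OF assms(1)] .
  then have "norm (?M x - ?M \<mu>) \<le> r"
    using assms(2) by (rule power2_le_imp_le)
  then show ?thesis
    unfolding d_def mat_inv_sqrt_inner[OF assms(1)]
    using ball_beyond_tangent_hyperplane[of "?M x" "?M \<mu>" r "?M p"]
    by (simp add: matrix_vector_mult_diff_distrib)
qed

lemma mem_tangent_halfspace_iff_corridor: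
  assumes "sym_pos_def \<Sigma>" "0 \<le> r" "p \<notin> ellipsoid \<mu> \<Sigma> r" "\<epsilon> \<le> 0"
  defines "d \<equiv> norm (mat_inv_sqrt \<Sigma> *v (\<mu> - p))"
  shows "x \<in> tangent_halfspace \<mu> \<Sigma> r p \<longleftrightarrow>
    (\<mu> - p) \<bullet> (matrix_inv \<Sigma> *v (x - p)) / d\<^sup>2 \<le> max (1 - r / d) \<epsilon>"
  using corridor_bound_iff[OF assms(2) whitened_dist_gt_radius[OF assms(1,3)] assms(4)]
  by (simp add: tangent_halfspace_def d_def)

lemma interior_tangent_halfspace:
  assumes "sym_pos_def \<Sigma>" "0 \<le> r" "p \<notin> ellipsoid \<mu> \<Sigma> r"
  defines "d \<equiv> norm (mat_inv_sqrt \<Sigma> *v (\<mu> - p))"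
  shows "interior (tangent_halfspace \<mu> \<Sigma> r p) =
    {x. (\<mu> - p) \<bullet> (matrix_inv \<Sigma> *v (x - p)) < d\<^sup>2 - r * d}"
proof -
  define g where "g = (\<mu> - p) v* matrix_inv \<Sigma>"
  have inner_g: "(\<mu> - p) \<bullet> (matrix_inv \<Sigma> *v (x - p)) = g \<bullet> x - g \<bullet> p" for x
    by (simp add: g_def dot_lmul_matrix inner_diff_right matrix_vector_mult_diff_distrib)
  have "g \<bullet> (\<mu> - p) = d\<^sup>2"
    by (simp add: g_def d_def dot_lmul_matrix mat_inv_sqrt_inner[OF assms(1)] power2_norm_eq_inner)
  moreover have "0 < d"
    unfolding d_def using whitened_dist_gt_radius[OF assms(1,3)] assms(2) by linarith
  ultimately have "g \<noteq> 0" by auto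
  moreover have "tangent_halfspace \<mu> \<Sigma> r p = {x. g \<bullet> x \<le> g \<bullet> p + (d\<^sup>2 - r * d)}"
    by (auto simp: tangent_halfspace_def inner_g d_def[symmetric])
  ultimately show ?thesis
    by (auto simp: inner_g)
qed

lemma self_mem_interior_tangent_halfspace:
  assumes "sym_pos_def \<Sigma>" "0 \<le> r" "p \<notin> ellipsoid \<mu> \<Sigma> r"
  shows "p \<in> interior (tangent_halfspace \<mu> \<Sigma> r p)"
proof -
  define d where "d = norm (mat_inv_sqrt \<Sigma> *v (\<mu> - p))"
  have "r < d" "0 \<le> r"
    using whitened_dist_gt_radius[OF assms(1,3)] assms(2) by (simp_all add: d_def)
  then have "r * d < d * d"
    by (intro mult_strict_right_mono) auto
  then show ?thesis
    by (simp add: interior_tangent_halfspace[OF assms] d_def[symmetric] power2_eq_square)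
qed

lemma interior_tangent_halfspace_disjoint_ellipsoid:
  assumes "sym_pos_def \<Sigma>" "0 \<le> r" "p \<notin> ellipsoid \<mu> \<Sigma> r"
  shows "interior (tangent_halfspace \<mu> \<Sigma> r p) \<inter> ellipsoid \<mu> \<Sigma> r = {}"
  using ellipsoid_beyond_tangent_hyperplane[OF assms(1,2), of _ \<mu> p]
  unfolding interior_tangent_halfspace[OF assms] by (auto simp: not_less[symmetric])

theorem proposition2:
  fixes K :: nat and \<mu> :: "nat \<Rightarrow> real^'n::finite" and \<Sigma> :: "nat \<Rightarrow> real^'n^'n"
    and \<kappa> :: "nat \<Rightarrow> real" and \<epsilon> :: real and p :: "real^'n"
  assumes "K \<ge> 1"
    and "\<And>k. k \<in> {1..K} \<Longrightarrow> sym_pos_def (\<Sigma> k)"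
    and "\<And>k. k \<in> {1..K} \<Longrightarrow> 0 \<le> \<kappa> k \<and> \<kappa> k < 1"
    and "\<epsilon> \<le> 0"
    and "p \<notin> Rbar K \<mu> \<Sigma> \<kappa>"
  shows "p \<in> interior (Scorr K \<mu> \<Sigma> \<kappa> \<epsilon> p) \<and>
         interior (Scorr K \<mu> \<Sigma> \<kappa> \<epsilon> p) \<subseteq> - Rbar K \<mu> \<Sigma> \<kappa>"
proof -
  define r where "r k = sqrt (chi2_cdf_inv CARD('n) (\<kappa> k))" for k
  define H where "H k = tangent_halfspace (\<mu> k) (\<Sigma> k) (r k) p" for k
  have Rbar: "Rbar K \<mu> \<Sigma> \<kappa> = (\<Union>k\<in>{1..K}. ellipsoid (\<mu> k) (\<Sigma> k) (r k))"
    by (simp add: Rbar_eq_Union_ellipsoid r_def)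
  have k: "sym_pos_def (\<Sigma> k)" "0 \<le> r k" "p \<notin> ellipsoid (\<mu> k) (\<Sigma> k) (r k)"
    if "k \<in> {1..K}" for k
    using assms(2)[OF that] assms(3)[OF that] assms(5) that
    by (simp_all add: r_def chi2_cdf_inv_nonneg Rbar)
  have "Scorr K \<mu> \<Sigma> \<kappa> \<epsilon> p = (\<Inter>k\<in>{1..K}. H k)"
    unfolding Scorr_def H_def r_def[symmetric]
    by (auto simp: mem_tangent_halfspace_iff_corridor[OF k assms(4)])
  then have "interior (Scorr K \<mu> \<Sigma> \<kappa> \<epsilon> p) = (\<Inter>k\<in>{1..K}. interior (H k))"
    by (simp add: interior_INT_finite)
  moreover have "p \<in> interior (H k)" "interior (H k) \<inter> ellipsoid (\<mu> k) (\<Sigma> k) (r k) = {}"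
    if "k \<in> {1..K}" for k
    unfolding H_def using self_mem_interior_tangent_halfspace[OF k[OF that]]
      interior_tangent_halfspace_disjoint_ellipsoid[OF k[OF that]] by simp_all
  ultimately show ?thesis
    unfolding Rbar by blast
qed

end
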